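(* Let $k\geq 2$ and let $G$ be a graph of order $n$ containing no cycle of length $2k+1$. Then for every vertex $w$ of $G$ with $d_w\geq 1$, \[ d_{w}+\frac{1}{d_{w}}\sum_{u\in\Gamma_{w}}d_{u}\leq n+2k-2. \]
   Context: All graphs are finite and simple. $\Gamma_w$ is the set of neighbors of $w$ and $d_w=|\Gamma_w|$ its degree. *)

theory Defs
  imports Complex_Main
begin

definition simple_graph :: "'a set \<Rightarrow> ('a \<Rightarrow> 'a \<Rightarrow> bool) \<Rightarrow> bool" where
  "simple_graph V E \<longleftrightarrow> finite V \<and> (\<forall>x y. E x y \<longrightarrow> x \<in> V \<and> y \<in> V)
     \<and> (\<forall>x y. E x y \<longrightarrow> E y x) \<and> (\<forall>x. \<not> E x x)"

definition neighbors :: "'a set \<Rightarrow> ('a \<Rightarrow> 'a \<Rightarrow> bool) \<Rightarrow> 'a \<Rightarrow> 'a set" where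
  "neighbors V E w = {u \<in> V. E w u}"

definition degree :: "'a set \<Rightarrow> ('a \<Rightarrow> 'a \<Rightarrow> bool) \<Rightarrow> 'a \<Rightarrow> nat" where
  "degree V E w = card (neighbors V E w)"

definition has_cycle_of_length :: "'a set \<Rightarrow> ('a \<Rightarrow> 'a \<Rightarrow> bool) \<Rightarrow> nat \<Rightarrow> bool" where
  "has_cycle_of_length V E L \<longleftrightarrow> L \<ge> 3 \<and> (\<exists>vs. length vs = L \<and> distinct vs \<and> set vs \<subseteq> V
     \<and> (\<forall>i<L. E (vs ! i) (vs ! ((i + 1) mod L))))"

end

theory Submission
  imports Defs
begin

text \<open>The neighbourhood of \<open>w\<close> spans no path on \<open>2k\<close> vertices, since such a path
  together with \<open>w\<close> would close a cycle of length \<open>2k + 1\<close>. By the Erdos--Gallai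
  theorem the graph induced on \<open>\<Gamma>\<^sub>w\<close> therefore has at most \<open>(k - 1) d\<^sub>w\<close> edges. Each
  neighbour \<open>u\<close> of \<open>w\<close> has at most \<open>n - d\<^sub>w\<close> neighbours outside \<open>\<Gamma>\<^sub>w\<close>, so
  \<open>\<Sum>\<^sub>u\<^sub>\<in>\<^sub>\<Gamma>\<^sub>w d\<^sub>u \<le> 2(k - 1) d\<^sub>w + d\<^sub>w (n - d\<^sub>w)\<close>; dividing by \<open>d\<^sub>w\<close> gives the claim.

  Erdos--Gallai is proved by deleting vertices of degree \<open>< k\<close>. Once the minimum degree
  is at least \<open>k\<close>, a longest path \<open>P\<close> through a vertex \<open>x\<close> has fewer than \<open>2k\<close>
  vertices while its two ends have at least \<open>k\<close> neighbours each on \<open>P\<close>; Posa's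
  crossing argument turns \<open>P\<close> into a cycle on the same vertex set, and maximality of
  \<open>P\<close> then forces every neighbour of \<open>x\<close> to lie on \<open>P\<close>, so \<open>d\<^sub>x \<le> 2k - 2\<close>.\<close>

definition path_in :: "('a \<Rightarrow> 'a \<Rightarrow> bool) \<Rightarrow> 'a set \<Rightarrow> 'a list \<Rightarrow> bool" where
  "path_in E S P \<longleftrightarrow> distinct P \<and> set P \<subseteq> S \<and> successively E P"

definition closed_walk :: "('a \<Rightarrow> 'a \<Rightarrow> bool) \<Rightarrow> 'a list \<Rightarrow> bool" where
  "closed_walk E cs \<longleftrightarrow> cs \<noteq> [] \<and> successively E cs \<and> E (last cs) (hd cs)"

lemma closed_walk_rotate1:
  assumes "closed_walk E cs"
  shows "closed_walk E (rotate1 cs)"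
proof -
  obtain x xs where "cs = x # xs"
    using assms by (cases cs) (auto simp: closed_walk_def)
  then show ?thesis
    using assms by (cases "xs = []")
      (simp_all add: closed_walk_def successively_append_iff successively_Cons[of E x xs])
qed

lemma closed_walk_rotate: "closed_walk E cs \<Longrightarrow> closed_walk E (rotate n cs)"
  by (induction n) (simp_all add: closed_walk_rotate1)

lemma has_cycle_of_length_if_closed_walk:
  assumes cyc: "closed_walk E cs" and "distinct cs" "set cs \<subseteq> V" "length cs \<ge> 3"
  shows "has_cycle_of_length V E (length cs)"
  unfolding has_cycle_of_length_def
proof (intro conjI exI allI impI)
  fix i assume i: "i < length cs"
  show "E (cs ! i) (cs ! ((i + 1) mod length cs))"
  proof (cases "Suc i < length cs")
    case True
    then show ?thesis using cyc by (simp add: closed_walk_def successively_nth)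
  next
    case False
    then have "i = length cs - 1" using i by simp
    then show ?thesis using cyc i by (auto simp: closed_walk_def last_conv_nth hd_conv_nth)
  qed
qed (use assms in auto)

text \<open>Posa's crossing: with \<open>P = p\<^sub>0 \<dots> p\<^sub>m\<close>, the edges \<open>p\<^sub>0 p\<^sub>i\<^sub>+\<^sub>1\<close> and \<open>p\<^sub>m p\<^sub>i\<close> close
  \<open>p\<^sub>0 \<dots> p\<^sub>i p\<^sub>m p\<^sub>m\<^sub>-\<^sub>1 \<dots> p\<^sub>i\<^sub>+\<^sub>1\<close> into a cycle.\<close>

lemma closed_walk_of_crossing:
  assumes "symp E" "distinct P" "successively E P" "Suc i < length P"
    and "E (hd P) (P ! Suc i)" "E (last P) (P ! i)"
  shows "\<exists>cs. closed_walk E cs \<and> distinct cs \<and> set cs = set P"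
proof (intro exI conjI)
  let ?cs = "take (Suc i) P @ rev (drop (Suc i) P)"
  have "last (take (Suc i) P) = P ! i" "hd (drop (Suc i) P) = P ! Suc i"
    using assms(4) by (simp_all add: take_Suc_conv_app_nth hd_drop_conv_nth)
  moreover have "successively E (take (Suc i) P)" "successively E (drop (Suc i) P)"
    using assms(3) by (simp_all add: successively_conv_nth)
  ultimately show "closed_walk E ?cs"
    using assms(1,4-6) unfolding closed_walk_def
    by (auto simp: successively_append_iff hd_rev last_rev hd_append symp_def
             elim: successively_mono)
  have "set ?cs = set (take (Suc i) P @ drop (Suc i) P)"
    by (simp only: set_append set_rev)
  then show "set ?cs = set P" by simp
  have "distinct (take (Suc i) P @ drop (Suc i) P)"
    using assms(2) by simp
  then show "distinct ?cs" by (simp only: distinct_append distinct_rev set_rev)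
qed

lemma ex_longest_path_through:
  assumes "finite S" "x \<in> S"
  shows "\<exists>P. path_in E S P \<and> x \<in> set P
           \<and> (\<forall>Q. path_in E S Q \<and> x \<in> set Q \<longrightarrow> length Q \<le> length P)"
proof -
  have "path_in E S [x] \<and> x \<in> set [x]" using assms(2) by (simp add: path_in_def)
  moreover have "\<forall>P. path_in E S P \<and> x \<in> set P \<longrightarrow> length P < Suc (card S)"
    using assms(1) by (auto simp: path_in_def le_imp_less_Suc card_mono simp flip: distinct_card)
  ultimately show ?thesis
    using Lattices_Big.ex_has_greatest_nat[of "\<lambda>P. path_in E S P \<and> x \<in> set P" "[x]" length]
    by blast
qed

lemma longest_path_closed_if_cycle:
  assumes "symp E" and P: "path_in E S P" "x \<in> set P"
    and longest: "\<forall>Q. path_in E S Q \<and> x \<in> set Q \<longrightarrow> length Q \<le> length P"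
    and cs: "closed_walk E cs" "distinct cs" "set cs = set P"
    and y: "y \<in> set P" and yz: "z \<in> S" "E y z"
  shows "z \<in> set P"
proof (rule ccontr)
  assume z: "z \<notin> set P"
  obtain j where "j < length cs" "cs ! j = y"
    using y cs(3) by (metis in_set_conv_nth)
  then have "hd (rotate j cs) = y"
    using cs(1) by (simp add: closed_walk_def hd_rotate_conv_nth)
  then have "path_in E S (z # rotate j cs)"
    using closed_walk_rotate[OF cs(1), of j] cs z P yz assms(1)
    by (auto simp: path_in_def closed_walk_def successively_Cons symp_def)
  moreover have "length (z # rotate j cs) = Suc (length P)"
    using cs(2,3) P(1) by (simp add: path_in_def flip: distinct_card)
  ultimately show False using longest P(2) cs(3) by fastforce
qed

lemma longest_path_ends_closed:
  assumes "symp E" and P: "path_in E S P" "x \<in> set P"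
    and longest: "\<forall>Q. path_in E S Q \<and> x \<in> set Q \<longrightarrow> length Q \<le> length P"
  shows "neighbors S E (hd P) \<subseteq> set P" "neighbors S E (last P) \<subseteq> set P"
proof -
  have "P \<noteq> []" using P(2) by auto
  show "neighbors S E (hd P) \<subseteq> set P"
  proof
    fix z assume z: "z \<in> neighbors S E (hd P)"
    show "z \<in> set P"
    proof (rule ccontr)
      assume "z \<notin> set P"
      then have "path_in E S (z # P)"
        using z P(1) assms(1) \<open>P \<noteq> []\<close>
        by (auto simp: path_in_def neighbors_def successively_Cons symp_def)
      then show False using longest P(2) by fastforce
    qed
  qed
  show "neighbors S E (last P) \<subseteq> set P"
  proof
    fix z assume z: "z \<in> neighbors S E (last P)"
    show "z \<in> set P"
    proof (rule ccontr)
      assume "z \<notin> set P"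
      then have "path_in E S (P @ [z])"
        using z P(1) \<open>P \<noteq> []\<close> by (auto simp: path_in_def neighbors_def successively_append_iff)
      then show False using longest P(2) by fastforce
    qed
  qed
qed

lemma ex_crossing_index:
  assumes "irreflp E" "P \<noteq> []"
    and "neighbors S E (hd P) \<subseteq> set P" "neighbors S E (last P) \<subseteq> set P"
    and "length P \<le> degree S E (hd P) + degree S E (last P)"
  shows "\<exists>i. Suc i < length P \<and> E (hd P) (P ! Suc i) \<and> E (last P) (P ! i)"
proof (rule ccontr)
  assume no_crossing: "\<not> ?thesis"
  define m where "m = length P - 1"
  define A where "A = {i. i < m \<and> E (hd P) (P ! Suc i)}"
  define B where "B = {i. i < m \<and> E (last P) (P ! i)}"
  have AB: "finite A" "finite B" "A \<union> B \<subseteq> {..<m}" by (auto simp: A_def B_def)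
  have "neighbors S E (hd P) \<subseteq> (\<lambda>i. P ! Suc i) ` A"
  proof
    fix z assume z: "z \<in> neighbors S E (hd P)"
    then obtain j where j: "j < length P" "P ! j = z"
      using assms(3) by (metis in_set_conv_nth subsetD)
    moreover have "j \<noteq> 0"
      using j z assms(1,2) by (cases j) (auto simp: neighbors_def hd_conv_nth irreflp_def)
    ultimately show "z \<in> (\<lambda>i. P ! Suc i) ` A"
      using z by (auto simp: A_def m_def neighbors_def gr0_conv_Suc)
  qed
  then have "degree S E (hd P) \<le> card A"
    unfolding degree_def using AB(1) by (meson card_image_le card_mono finite_imageI le_trans)
  moreover have "neighbors S E (last P) \<subseteq> (\<lambda>i. P ! i) ` B"
  proof
    fix z assume z: "z \<in> neighbors S E (last P)"
    then obtain j where j: "j < length P" "P ! j = z"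
      using assms(4) by (metis in_set_conv_nth subsetD)
    moreover have "j \<noteq> m"
      using j z assms(1,2) by (auto simp: neighbors_def last_conv_nth irreflp_def m_def)
    ultimately show "z \<in> (\<lambda>i. P ! i) ` B"
      using z by (auto simp: B_def m_def neighbors_def)
  qed
  then have "degree S E (last P) \<le> card B"
    unfolding degree_def using AB(2) by (meson card_image_le card_mono finite_imageI le_trans)
  moreover have "A \<inter> B = {}"
    using no_crossing by (auto simp: A_def B_def m_def)
  then have "card A + card B \<le> m"
    using AB card_mono[OF finite_lessThan AB(3)] by (simp add: card_Un_disjoint)
  moreover have "length P > 0" using assms(2) by simp
  ultimately show False using assms(5) unfolding m_def by linarith
qed

lemma degree_le_if_min_degree:
  assumes "finite S" "symp E" "irreflp E"
    and min_degree: "\<forall>y\<in>S. k \<le> degree S E y"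
    and no_long_path: "\<forall>P. path_in E S P \<longrightarrow> length P < 2 * k"
    and "x \<in> S"
  shows "degree S E x \<le> 2 * k - 2"
proof -
  obtain P where P: "path_in E S P" "x \<in> set P"
    and longest: "\<forall>Q. path_in E S Q \<and> x \<in> set Q \<longrightarrow> length Q \<le> length P"
    using ex_longest_path_through[OF assms(1,6)] by blast
  have "P \<noteq> []" using P(2) by auto
  have short: "length P < 2 * k" using no_long_path P(1) by blast
  have ends: "hd P \<in> S" "last P \<in> S" using P(1) \<open>P \<noteq> []\<close> by (auto simp: path_in_def)
  have "neighbors S E (hd P) \<subseteq> set P" "neighbors S E (last P) \<subseteq> set P"
    using longest_path_ends_closed[OF assms(2) P longest] by blast+
  moreover have "length P \<le> degree S E (hd P) + degree S E (last P)"
    using short min_degree[rule_format, OF ends(1)] min_degree[rule_format, OF ends(2)] by linarith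
  ultimately obtain i where i: "Suc i < length P" "E (hd P) (P ! Suc i)" "E (last P) (P ! i)"
    using ex_crossing_index[OF assms(3) \<open>P \<noteq> []\<close>] by blast
  then obtain cs where "closed_walk E cs" "distinct cs" "set cs = set P"
    using closed_walk_of_crossing[OF assms(2) _ _ i] P(1) unfolding path_in_def by blast
  then have "neighbors S E x \<subseteq> set P - {x}"
    using longest_path_closed_if_cycle[OF assms(2) P longest] P(2) assms(3)
    by (auto simp: neighbors_def irreflp_def)
  then have "degree S E x \<le> length P - 1"
    unfolding degree_def using P by (metis card_Diff_singleton card_mono distinct_card
        finite_Diff finite_set path_in_def)
  then show ?thesis using short by linarith
qed

lemma sum_degree_remove:
  assumes "finite S" "symp E" "x \<in> S"
  shows "(\<Sum>a\<in>S. degree S E a) \<le> (\<Sum>a\<in>S - {x}. degree (S - {x}) E a) + 2 * degree S E x"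
proof -
  have split: "degree S E a = degree (S - {x}) E a + of_bool (E a x)" for a
  proof -
    have "neighbors S E a = neighbors (S - {x}) E a \<union> (if E a x then {x} else {})"
      using assms(3) by (auto simp: neighbors_def)
    then show ?thesis
      using assms(1) by (simp add: degree_def neighbors_def)
  qed
  have "(\<Sum>a\<in>S - {x}. of_bool (E a x)) = card ((S - {x}) \<inter> {a. E a x})"
    using assms(1) by (simp add: sum.If_cases)
  also have "\<dots> \<le> degree S E x"
    unfolding degree_def neighbors_def using assms(1,2)
    by (intro card_mono) (auto simp: symp_def)
  finally have "(\<Sum>a\<in>S - {x}. degree S E a)
      \<le> (\<Sum>a\<in>S - {x}. degree (S - {x}) E a) + degree S E x"
    by (simp add: split sum.distrib)
  then show ?thesis
    using assms(1,3) by (simp add: sum.remove)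
qed

text \<open>Erdos--Gallai, counting every edge twice.\<close>

lemma sum_degree_le_if_no_long_path:
  assumes "finite S" "symp E" "irreflp E"
    and "\<forall>P. path_in E S P \<longrightarrow> length P < 2 * k"
  shows "(\<Sum>a\<in>S. degree S E a) \<le> (2 * k - 2) * card S"
  using assms(1,4)
proof (induction S rule: finite_psubset_induct)
  case (psubset S)
  show ?case
  proof (cases "\<exists>x\<in>S. degree S E x < k")
    case True
    then obtain x where x: "x \<in> S" "degree S E x < k" by blast
    have "(\<Sum>a\<in>S - {x}. degree (S - {x}) E a) \<le> (2 * k - 2) * card (S - {x})"
      using psubset.IH[of "S - {x}"] psubset.prems x(1) by (force simp: path_in_def)
    then have "(\<Sum>a\<in>S. degree S E a) \<le> (2 * k - 2) * card (S - {x}) + 2 * degree S E x"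
      using sum_degree_remove[OF psubset.hyps assms(2) x(1)] by linarith
    also have "\<dots> \<le> (2 * k - 2) * card (S - {x}) + (2 * k - 2)"
      using x(2) by linarith
    also have "\<dots> = (2 * k - 2) * card S"
      using card_Suc_Diff1[OF psubset.hyps x(1)] by (metis mult_Suc_right add.commute)
    finally show ?thesis .
  next
    case False
    then have "\<forall>y\<in>S. k \<le> degree S E y" by (auto simp: not_less)
    then have "\<forall>a\<in>S. degree S E a \<le> 2 * k - 2"
      using degree_le_if_min_degree[OF psubset.hyps assms(2,3)] psubset.prems by blast
    then have "(\<Sum>a\<in>S. degree S E a) \<le> (\<Sum>a\<in>S. 2 * k - 2)" by (meson sum_mono)
    then show ?thesis by (simp add: mult.commute)
  qed
qed

lemma no_long_path_in_neighbors:
  assumes "simple_graph V E" "w \<in> V" "k \<ge> 1"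
    and "\<not> has_cycle_of_length V E (2 * k + 1)"
    and "path_in E (neighbors V E w) P"
  shows "length P < 2 * k"
proof (rule ccontr)
  assume "\<not> length P < 2 * k"
  define Q where "Q = take (2 * k) P"
  have Q: "length Q = 2 * k" "distinct Q" "successively E Q" "set Q \<subseteq> neighbors V E w"
    using \<open>\<not> length P < 2 * k\<close> assms(5) set_take_subset[of "2 * k" P]
    unfolding Q_def path_in_def by (auto simp add: successively_conv_nth)
  then have "Q \<noteq> []" using assms(3) by auto
  then have "hd Q \<in> neighbors V E w" "last Q \<in> neighbors V E w" using Q(4) by auto
  then have "closed_walk E (w # Q)"
    using Q(3) assms(1) \<open>Q \<noteq> []\<close>
    by (auto simp: closed_walk_def successively_Cons neighbors_def simple_graph_def)
  moreover have "distinct (w # Q)" "set (w # Q) \<subseteq> V"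
    using Q(2,4) assms(1,2) by (auto simp: neighbors_def simple_graph_def)
  moreover have "length (w # Q) = 2 * k + 1" "length (w # Q) \<ge> 3"
    using Q(1) assms(3) by simp_all
  ultimately show False
    using has_cycle_of_length_if_closed_walk[of E "w # Q" V] assms(4) by simp
qed

lemma degree_le_degree_subset:
  assumes "finite V" "A \<subseteq> V"
  shows "degree V E u \<le> degree A E u + card (V - A)"
proof -
  have "neighbors V E u \<subseteq> neighbors A E u \<union> (V - A)"
    by (auto simp: neighbors_def)
  then have "degree V E u \<le> card (neighbors A E u \<union> (V - A))"
    unfolding degree_def using assms by (intro card_mono) (auto simp: neighbors_def finite_subset)
  also have "\<dots> \<le> degree A E u + card (V - A)"
    unfolding degree_def by (rule card_Un_le)
  finally show ?thesis .
qed

theorem mainTheorem9: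
  fixes V :: "'a set" and E :: "'a \<Rightarrow> 'a \<Rightarrow> bool" and k :: nat and w :: 'a
  assumes "simple_graph V E"
    and "k \<ge> 2"
    and "\<not> has_cycle_of_length V E (2 * k + 1)"
    and "w \<in> V"
    and "degree V E w \<ge> 1"
  shows "real (degree V E w) + (\<Sum>u\<in>neighbors V E w. real (degree V E u)) / real (degree V E w)
           \<le> real (card V) + 2 * real k - 2"
proof -
  define N and d where "N = neighbors V E w" and "d = degree V E w"
  have graph: "finite V" "symp E" "irreflp E"
    using assms(1) by (auto simp: simple_graph_def symp_def irreflp_def)
  have N: "N \<subseteq> V" "finite N" "card N = d"
    using graph(1) by (auto simp: N_def d_def neighbors_def degree_def)
  have "(\<Sum>u\<in>N. degree N E u) \<le> (2 * k - 2) * d"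
    using sum_degree_le_if_no_long_path[OF N(2) graph(2,3)] no_long_path_in_neighbors[OF assms(1,4)]
      assms(2,3) N(3) by (simp add: N_def)
  have "(\<Sum>u\<in>N. degree V E u) \<le> (\<Sum>u\<in>N. degree N E u + card (V - N))"
    by (intro sum_mono degree_le_degree_subset graph(1) N(1))
  also have "\<dots> = (\<Sum>u\<in>N. degree N E u) + d * (card V - d)"
    using N graph(1) by (simp add: sum.distrib card_Diff_subset)
  also have "\<dots> \<le> (2 * k - 2) * d + d * (card V - d)"
    using \<open>(\<Sum>u\<in>N. degree N E u) \<le> (2 * k - 2) * d\<close> by simp
  finally have "(\<Sum>u\<in>N. real (degree V E u)) \<le> real ((2 * k - 2) * d + d * (card V - d))"
    by (simp only: of_nat_sum[symmetric] of_nat_le_iff)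
  also have "\<dots> = real d * (real (card V) + 2 * real k - 2 - real d)"
  proof -
    have "real (2 * k - 2) = 2 * real k - 2" "real (card V - d) = real (card V) - real d"
      using assms(2) card_mono[OF graph(1) N(1)] N(3) by simp_all
    then show ?thesis unfolding of_nat_add of_nat_mult by (simp add: algebra_simps)
  qed
  finally have "(\<Sum>u\<in>N. real (degree V E u)) / real d \<le> real (card V) + 2 * real k - 2 - real d"
    using assms(5) by (simp add: d_def divide_le_eq mult.commute)
  then show ?thesis by (simp add: N_def d_def)
qed

end
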